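(* Let $\mathcal U=(\mathcal U^{ij}_{\alpha\beta})$ be a four-index complex array, and let $(X_1,Y_1,X_2,Y_2)$ and $(\widetilde X_1,\widetilde Y_1,\widetilde X_2,\widetilde Y_2)$ be two admissible decompositions of $\mathcal U$ (with the same $d_l,d_r$) in which $X_1,X_2,\widetilde X_1,\widetilde X_2$ are left-invertible and $Y_1,Y_2,\widetilde Y_1,\widetilde Y_2$ are right-invertible. Then there exist nonzero scalars $\delta_1,\delta_2\in\mathbb{C}$ with $\delta_1\delta_2=1$ and unitary matrices $W_1\in U(d_r)$, $W_2\in U(d_l)$ such that, as matrices, $$\widetilde X_i=\delta_i\,X_iW_i,\qquad \widetilde Y_i=\frac{1}{\delta_i}\,W_i^\dagger Y_i,\qquad i=1,2.$$
   Context: Fix positive integers $d$ (physical dimension), $D$ (bond dimension), $d_l,d_r$. Let $\mathcal U=(\mathcal U^{ij}_{\alpha\beta})$ with $i,j\in\{1,\dots,d\}$, $\alpha,\beta\in\{1,\dots,D\}$. An admissible decomposition of $\mathcal U$ is a quadruple of complex arrays $X_1=((X_1)^i_{\beta,b})$, $Y_1=((Y_1)^j_{b,\alpha})$ with $b\in\{1,\dots,d_r\}$, and $X_2=((X_2)^i_{\alpha,a})$, $Y_2=((Y_2)^j_{a,\beta})$ with $a\in\{1,\dots,d_l\}$, such that (a) $\mathcal U^{ij}_{\alpha\beta}=\sum_{b}(X_1)^i_{\beta,b}(Y_1)^j_{b,\alpha}=\sum_a (X_2)^i_{\alpha,a}(Y_2)^j_{a,\beta}$ for all $i,j,\alpha,\beta$;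 (b) the matrices $u$ with rows indexed by $(a,b)$ and columns by $(j,j')$, $u_{(a,b),(j,j')}=\sum_{\gamma}(Y_2)^j_{a,\gamma}(Y_1)^{j'}_{b,\gamma}$, and $v$ with rows indexed by $(i,i')$ and columns by $(b,a)$, $v_{(i,i'),(b,a)}=\sum_\gamma (X_1)^i_{\gamma,b}(X_2)^{i'}_{\gamma,a}$, are both unitary (in particular $d_ld_r=d^2$). Matrix conventions: $X_1$ is regarded as the $(dD)\times d_r$ matrix with rows $(i,\beta)$ and columns $b$; $Y_1$ as the $d_r\times(Dd)$ matrix with rows $b$ and columns $(\alpha,j)$; $X_2$ as the $(dD)\times d_l$ matrix with rows $(i,\alpha)$ and columns $a$; $Y_2$ as the $d_l\times(dD)$ matrix with rows $a$ and columns $(j,\beta)$. Left-invertible means having a left inverse (full column rank); right-invertible means having a right inverse (full row rank). Products $X_iW_i$ and $W_i^\dagger Y_i$ are ordinary matrix products in these conventions. *)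

theory Defs
  imports "Jordan_Normal_Form.Matrix"
begin

definition adj_mat :: "complex mat \<Rightarrow> complex mat" where
  "adj_mat A = mat (dim_col A) (dim_row A) (\<lambda>(i,j). cnj (A $$ (j,i)))"

definition unitary_mat :: "nat \<Rightarrow> complex mat \<Rightarrow> bool" where
  "unitary_mat n W \<longleftrightarrow> W \<in> carrier_mat n n \<and>
     adj_mat W * W = 1\<^sub>m n \<and> W * adj_mat W = 1\<^sub>m n"

definition left_invertible :: "complex mat \<Rightarrow> bool" where
  "left_invertible A \<longleftrightarrow>
     (\<exists>L \<in> carrier_mat (dim_col A) (dim_row A). L * A = 1\<^sub>m (dim_col A))"

definition right_invertible :: "complex mat \<Rightarrow> bool" where
  "right_invertible A \<longleftrightarrow>
     (\<exists>R \<in> carrier_mat (dim_col A) (dim_row A). A * R = 1\<^sub>m (dim_row A))"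

(* Index conventions (0-based):
   U i j \<alpha> \<beta> = U^{ij}_{\<alpha>\<beta>}, i,j < d, \<alpha>,\<beta> < D.
   X1 : (d*D) x dr matrix, (X1)^i_{\<beta>,b} = X1 $$ (i*D+\<beta>, b)
   Y1 : dr x (D*d) matrix, (Y1)^j_{b,\<alpha>} = Y1 $$ (b, \<alpha>*d+j)
   X2 : (d*D) x dl matrix, (X2)^i_{\<alpha>,a} = X2 $$ (i*D+\<alpha>, a)
   Y2 : dl x (d*D) matrix, (Y2)^j_{a,\<beta>} = Y2 $$ (a, j*D+\<beta>) *)

definition u_mat :: "nat \<Rightarrow> nat \<Rightarrow> nat \<Rightarrow> nat \<Rightarrow> complex mat \<Rightarrow> complex mat \<Rightarrow> complex mat" where
  "u_mat d D dl dr Y1 Y2 = mat (dl*dr) (d*d) (\<lambda>(r,c).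
     (\<Sum>\<gamma><D. Y2 $$ (r div dr, (c div d)*D+\<gamma>) * Y1 $$ (r mod dr, \<gamma>*d + c mod d)))"

definition v_mat :: "nat \<Rightarrow> nat \<Rightarrow> nat \<Rightarrow> nat \<Rightarrow> complex mat \<Rightarrow> complex mat \<Rightarrow> complex mat" where
  "v_mat d D dl dr X1 X2 = mat (d*d) (dr*dl) (\<lambda>(r,c).
     (\<Sum>\<gamma><D. X1 $$ ((r div d)*D+\<gamma>, c div dl) * X2 $$ ((r mod d)*D+\<gamma>, c mod dl)))"

definition admissible ::
  "nat \<Rightarrow> nat \<Rightarrow> nat \<Rightarrow> nat \<Rightarrow> (nat \<Rightarrow> nat \<Rightarrow> nat \<Rightarrow> nat \<Rightarrow> complex) \<Rightarrow>
   complex mat \<Rightarrow> complex mat \<Rightarrow> complex mat \<Rightarrow> complex mat \<Rightarrow> bool" where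
  "admissible d D dl dr U X1 Y1 X2 Y2 \<longleftrightarrow>
     X1 \<in> carrier_mat (d*D) dr \<and> Y1 \<in> carrier_mat dr (D*d) \<and>
     X2 \<in> carrier_mat (d*D) dl \<and> Y2 \<in> carrier_mat dl (d*D) \<and>
     (\<forall>i<d. \<forall>j<d. \<forall>\<alpha><D. \<forall>\<beta><D.
        U i j \<alpha> \<beta> = (\<Sum>b<dr. X1 $$ (i*D+\<beta>, b) * Y1 $$ (b, \<alpha>*d+j)) \<and>
        U i j \<alpha> \<beta> = (\<Sum>a<dl. X2 $$ (i*D+\<alpha>, a) * Y2 $$ (a, j*D+\<beta>))) \<and>
     unitary_mat (d*d) (u_mat d D dl dr Y1 Y2) \<and>
     unitary_mat (d*d) (v_mat d D dl dr X1 X2)"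

end

(* Both decompositions factor the same two reshapings X1 Y1 and X2 Y2 of U through the inner
   dimensions dr and dl with full-rank factors, so they differ by invertible gauges:
   X1' = X1 G, Y1' = G^-1 Y1 and X2' = X2 H, Y2' = H^-1 Y2.  The gauges act on the matrix v by
   right multiplication with the Kronecker product G (x) H, so the unitarity of v for both
   decompositions makes G (x) H an isometry, i.e. (G^dagger G) (x) (H^dagger H) = 1.  A Kronecker
   product equals the identity only if both factors are scalar, so G^dagger G = c 1 and
   H^dagger H = c^-1 1 with c > 0, and dividing G by delta = sqrt c and multiplying H by delta
   yields the unitaries W1 and W2. *)

theory Submission
  imports Defs
begin

lemma index_mult_mat_sum:
  assumes "A \<in> carrier_mat n k" "B \<in> carrier_mat k m" "i < n" "j < m"
  shows "(A * B) $$ (i, j) = (\<Sum>l<k. A $$ (i, l) * B $$ (l, j))"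
  using assms by (simp add: scalar_prod_def atLeast0LessThan)

lemma sum_lessThan_mult_split:
  "(\<Sum>p<m * n. f p) = (\<Sum>i<m. \<Sum>j<n. f (i * n + j :: nat))"
proof -
  have "(\<Sum>p<m * n. f p) = (\<Sum>i<m. sum f {i * n..<i * n + n})"
    by (simp add: sum.nat_group)
  also have "\<dots> = (\<Sum>i<m. \<Sum>j<n. f (i * n + j))"
    using sum.shift_bounds_nat_ivl[of f 0 "i * n" n for i]
    by (simp add: atLeast0LessThan add.commute)
  finally show ?thesis .
qed

lemma mult_add_less_mult:
  assumes "(i :: nat) < m" "j < n"
  shows "i * n + j < m * n"
proof -
  have "Suc i * n \<le> m * n" using assms(1) by (intro mult_le_mono1) simp
  thus ?thesis using assms(2) by simp
qed

lemma mult_add_eq_mult_add_iff: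
  assumes "(j :: nat) < n" "j' < n"
  shows "i * n + j = i' * n + j' \<longleftrightarrow> i = i' \<and> j = j'"
proof
  assume "i * n + j = i' * n + j'"
  hence "(i * n + j) div n = (i' * n + j') div n" "(i * n + j) mod n = (i' * n + j') mod n"
    by simp_all
  thus "i = i' \<and> j = j'" using assms by simp
qed simp

lemma smult_smult_mat: "a \<cdot>\<^sub>m (b \<cdot>\<^sub>m A) = (a * b :: 'a :: semigroup_mult) \<cdot>\<^sub>m A"
  by (rule eq_matI) (auto simp: mult.assoc)

lemma one_smult_mat [simp]: "(1 :: 'a :: monoid_mult) \<cdot>\<^sub>m A = A"
  by (rule eq_matI) auto

lemma adj_mat_carrier [simp]: "A \<in> carrier_mat n m \<Longrightarrow> adj_mat A \<in> carrier_mat m n"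
  by (simp add: adj_mat_def)

lemma dim_adj_mat [simp]:
  "dim_row (adj_mat A) = dim_col A" "dim_col (adj_mat A) = dim_row A"
  by (simp_all add: adj_mat_def)

lemma index_adj_mat [simp]:
  "i < dim_col A \<Longrightarrow> j < dim_row A \<Longrightarrow> adj_mat A $$ (i, j) = cnj (A $$ (j, i))"
  by (simp add: adj_mat_def)

lemma adj_mat_mult:
  assumes "A \<in> carrier_mat n k" "B \<in> carrier_mat k m"
  shows "adj_mat (A * B) = adj_mat B * adj_mat A"
proof (rule eq_matI)
  fix i j assume "i < dim_row (adj_mat B * adj_mat A)" "j < dim_col (adj_mat B * adj_mat A)"
  hence ij: "i < m" "j < n" using assms by simp_all
  have "adj_mat (A * B) $$ (i, j) = cnj (\<Sum>l<k. A $$ (j, l) * B $$ (l, i))"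
    using assms ij by (simp add: index_mult_mat_sum[OF assms] del: index_mult_mat(1))
  also have "\<dots> = (adj_mat B * adj_mat A) $$ (i, j)"
    using assms ij by (simp add: index_mult_mat_sum[of _ m k _ n] cnj_sum mult.commute
        del: index_mult_mat(1))
  finally show "adj_mat (A * B) $$ (i, j) = (adj_mat B * adj_mat A) $$ (i, j)" .
qed (use assms in simp_all)

lemma adj_mat_smult: "adj_mat (c \<cdot>\<^sub>m A) = cnj c \<cdot>\<^sub>m adj_mat A"
  by (rule eq_matI) (auto simp: adj_mat_def)

lemma adj_mat_mult_self_diag:
  assumes "A \<in> carrier_mat n m" "j < m"
  shows "(adj_mat A * A) $$ (j, j) = of_real (\<Sum>k<n. (cmod (A $$ (k, j)))\<^sup>2)"
  using assms by (simp add: index_mult_mat_sum[of _ m n] complex_norm_square mult.commute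
      del: index_mult_mat(1) flip: of_real_power)

definition kronecker_mat :: "'a :: times mat \<Rightarrow> 'a mat \<Rightarrow> 'a mat" where
  "kronecker_mat A B = mat (dim_row A * dim_row B) (dim_col A * dim_col B)
     (\<lambda>(i, j). A $$ (i div dim_row B, j div dim_col B) * B $$ (i mod dim_row B, j mod dim_col B))"

lemma kronecker_mat_carrier [simp]:
  "A \<in> carrier_mat n m \<Longrightarrow> B \<in> carrier_mat n' m' \<Longrightarrow> kronecker_mat A B \<in> carrier_mat (n * n') (m * m')"
  by (simp add: kronecker_mat_def)

lemma dim_kronecker_mat [simp]:
  "dim_row (kronecker_mat A B) = dim_row A * dim_row B"
  "dim_col (kronecker_mat A B) = dim_col A * dim_col B"
  by (simp_all add: kronecker_mat_def)

lemma index_kronecker_mat: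
  assumes "A \<in> carrier_mat n m" "B \<in> carrier_mat n' m'" "i < n" "j < m" "i' < n'" "j' < m'"
  shows "kronecker_mat A B $$ (i * n' + i', j * m' + j') = A $$ (i, j) * B $$ (i', j')"
  using assms by (simp add: kronecker_mat_def mult_add_less_mult)

lemma kronecker_matI:
  assumes "A \<in> carrier_mat n m" "B \<in> carrier_mat n' m'" "M \<in> carrier_mat (n * n') (m * m')"
    and "\<And>i j i' j'. i < n \<Longrightarrow> j < m \<Longrightarrow> i' < n' \<Longrightarrow> j' < m' \<Longrightarrow>
      M $$ (i * n' + i', j * m' + j') = A $$ (i, j) * B $$ (i', j')"
  shows "kronecker_mat A B = M"
proof (rule eq_matI)
  fix r c assume "r < dim_row M" "c < dim_col M"
  hence r: "r < n * n'" and c: "c < m * m'" using assms(3) by auto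
  hence "n' > 0" "m' > 0" by (auto intro: ccontr)
  moreover have "r div n' < n" "c div m' < m"
    using r c by (simp_all add: less_mult_imp_div_less)
  ultimately show "kronecker_mat A B $$ (r, c) = M $$ (r, c)"
    using assms(1,2) assms(4)[of "r div n'" "c div m'" "r mod n'" "c mod m'"] r c
    by (simp add: kronecker_mat_def)
qed (use assms in auto)

lemma adj_mat_kronecker_mat:
  assumes "A \<in> carrier_mat n m" "B \<in> carrier_mat n' m'"
  shows "adj_mat (kronecker_mat A B) = kronecker_mat (adj_mat A) (adj_mat B)"
  by (rule sym, rule kronecker_matI[where n = m and m = n and n' = m' and m' = n'])
    (use assms in \<open>simp_all add: index_kronecker_mat mult_add_less_mult\<close>)

lemma kronecker_mat_mult:
  fixes A C :: "'a :: comm_semiring_1 mat"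
  assumes A: "A \<in> carrier_mat n k" and B: "B \<in> carrier_mat n' k'"
    and C: "C \<in> carrier_mat k m" and D: "D \<in> carrier_mat k' m'"
  shows "kronecker_mat A B * kronecker_mat C D = kronecker_mat (A * C) (B * D)"
proof (rule sym, rule kronecker_matI[of _ n m _ n' m'])
  fix i j i' j' assume ij: "i < n" "j < m" "i' < n'" "j' < m'"
  have "(kronecker_mat A B * kronecker_mat C D) $$ (i * n' + i', j * m' + j')
      = (\<Sum>l<k. \<Sum>l'<k'. kronecker_mat A B $$ (i * n' + i', l * k' + l')
                        * kronecker_mat C D $$ (l * k' + l', j * m' + j'))"
    using ij by (simp add: index_mult_mat_sum[OF kronecker_mat_carrier[OF A B] kronecker_mat_carrier[OF C D]]
        mult_add_less_mult sum_lessThan_mult_split del: index_mult_mat(1))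
  also have "\<dots> = (\<Sum>l<k. \<Sum>l'<k'. (A $$ (i, l) * C $$ (l, j)) * (B $$ (i', l') * D $$ (l', j')))"
    using ij by (intro sum.cong refl)
      (simp add: index_kronecker_mat[OF A B] index_kronecker_mat[OF C D] mult_ac)
  also have "\<dots> = (A * C) $$ (i, j) * (B * D) $$ (i', j')"
    using A B C D ij by (simp add: index_mult_mat_sum sum_product del: index_mult_mat(1))
  finally show "(kronecker_mat A B * kronecker_mat C D) $$ (i * n' + i', j * m' + j')
      = (A * C) $$ (i, j) * (B * D) $$ (i', j')" .
qed (use A B C D in auto)

lemma kronecker_mat_eq_one_mat:
  fixes P Q :: "'a :: field mat"
  assumes P: "P \<in> carrier_mat k k" and Q: "Q \<in> carrier_mat l l" and "0 < k" "0 < l"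
    and PQ: "kronecker_mat P Q = 1\<^sub>m (k * l)"
  shows "P $$ (0, 0) \<noteq> 0" "P = P $$ (0, 0) \<cdot>\<^sub>m 1\<^sub>m k" "Q = inverse (P $$ (0, 0)) \<cdot>\<^sub>m 1\<^sub>m l"
proof -
  have entry: "P $$ (i, j) * Q $$ (i', j') = (if i = j \<and> i' = j' then 1 else 0)"
    if "i < k" "j < k" "i' < l" "j' < l" for i j i' j'
    using index_kronecker_mat[OF P Q that] that
    by (simp add: PQ mult_add_less_mult mult_add_eq_mult_add_iff)
  let ?p = "P $$ (0, 0)"
  have pq: "?p * Q $$ (0, 0) = 1" using entry[of 0 0 0 0] assms by simp
  thus p: "?p \<noteq> 0" by auto
  have q: "Q $$ (0, 0) = inverse ?p" using inverse_unique[OF pq] by simp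
  show "P = ?p \<cdot>\<^sub>m 1\<^sub>m k"
  proof (rule eq_matI)
    fix i j assume "i < dim_row (?p \<cdot>\<^sub>m 1\<^sub>m k)" "j < dim_col (?p \<cdot>\<^sub>m 1\<^sub>m k)"
    hence ij: "i < k" "j < k" by simp_all
    hence "P $$ (i, j) * inverse ?p = (if i = j then 1 else 0)"
      using entry[of i j 0 0] assms by (simp add: q)
    thus "P $$ (i, j) = (?p \<cdot>\<^sub>m 1\<^sub>m k) $$ (i, j)"
      using ij p by (simp add: field_simps split: if_splits)
  qed (use P in simp_all)
  show "Q = inverse ?p \<cdot>\<^sub>m 1\<^sub>m l"
  proof (rule eq_matI)
    fix i j assume "i < dim_row (inverse ?p \<cdot>\<^sub>m 1\<^sub>m l)" "j < dim_col (inverse ?p \<cdot>\<^sub>m 1\<^sub>m l)"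
    hence ij: "i < l" "j < l" by simp_all
    hence "?p * Q $$ (i, j) = (if i = j then 1 else 0)"
      using entry[of 0 0 i j] assms by simp
    thus "Q $$ (i, j) = (inverse ?p \<cdot>\<^sub>m 1\<^sub>m l) $$ (i, j)"
      using ij p by (simp add: field_simps split: if_splits)
  qed (use Q in simp_all)
qed

lemma gram_kronecker_eq_one_mat_scaling:
  assumes G: "G \<in> carrier_mat k k" and H: "H \<in> carrier_mat l l" and "0 < k" "0 < l"
    and "kronecker_mat (adj_mat G * G) (adj_mat H * H) = 1\<^sub>m (k * l)"
  obtains \<delta> :: complex where "\<delta> \<noteq> 0"
    "adj_mat G * G = (cnj \<delta> * \<delta>) \<cdot>\<^sub>m 1\<^sub>m k"
    "adj_mat H * H = (cnj (1 / \<delta>) * (1 / \<delta>)) \<cdot>\<^sub>m 1\<^sub>m l"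
proof -
  let ?c = "(adj_mat G * G) $$ (0, 0)"
  have "adj_mat G * G \<in> carrier_mat k k" "adj_mat H * H \<in> carrier_mat l l"
    using G H by auto
  note scalar = kronecker_mat_eq_one_mat[OF this assms(3-5)]
  define s where "s = (\<Sum>i<k. (cmod (G $$ (i, 0)))\<^sup>2)"
  have c: "?c = of_real s"
    unfolding s_def using G assms(3) by (rule adj_mat_mult_self_diag)
  have "s \<noteq> 0" using c scalar(1) by auto
  moreover have "s \<ge> 0" unfolding s_def by (simp add: sum_nonneg)
  ultimately have s: "s > 0" by simp
  define \<delta> where "\<delta> = complex_of_real (sqrt s)"
  have "\<delta> \<noteq> 0" using s by (simp add: \<delta>_def)
  moreover have "cnj \<delta> * \<delta> = ?c"
    using s by (simp add: \<delta>_def c flip: of_real_mult)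
  moreover have "cnj (1 / \<delta>) * (1 / \<delta>) = inverse ?c"
    using s by (simp add: \<delta>_def c field_simps flip: of_real_mult)
  ultimately show thesis using that scalar(2,3) by simp
qed

lemma unitary_rescaling:
  assumes G: "G \<in> carrier_mat k k" and G': "G' \<in> carrier_mat k k" "G * G' = 1\<^sub>m k"
    and \<delta>: "\<delta> \<noteq> 0" and gram: "adj_mat G * G = (cnj \<delta> * \<delta>) \<cdot>\<^sub>m 1\<^sub>m k"
  obtains W where "unitary_mat k W" "G = \<delta> \<cdot>\<^sub>m W" "G' = (1 / \<delta>) \<cdot>\<^sub>m adj_mat W"
proof -
  define W where "W = (1 / \<delta>) \<cdot>\<^sub>m G"
  have W: "W \<in> carrier_mat k k" and aW: "adj_mat W \<in> carrier_mat k k"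
    using G by (simp_all add: W_def)
  have GW: "G = \<delta> \<cdot>\<^sub>m W" using \<delta> by (simp add: W_def smult_smult_mat)
  have "adj_mat W * W = (cnj (1 / \<delta>) * (1 / \<delta>)) \<cdot>\<^sub>m (adj_mat G * G)"
    using G by (simp add: W_def adj_mat_smult smult_smult_mat
        mult_smult_assoc_mat[OF adj_mat_carrier[OF G] smult_carrier_mat[OF G]]
        mult_smult_distrib[OF adj_mat_carrier[OF G] G])
  hence WW: "adj_mat W * W = 1\<^sub>m k"
    using \<delta> by (simp add: gram smult_smult_mat field_simps)
  have "adj_mat W = (adj_mat W * G) * G'"
    using aW G G' by (simp add: right_mult_one_mat[OF aW])
  also have "adj_mat W * G = \<delta> \<cdot>\<^sub>m 1\<^sub>m k"
    using WW by (simp add: GW mult_smult_distrib[OF aW W])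
  finally have adjW: "adj_mat W = \<delta> \<cdot>\<^sub>m G'"
    using G' by (simp add: mult_smult_assoc_mat[OF one_carrier_mat G'(1)])
  hence G'W: "G' = (1 / \<delta>) \<cdot>\<^sub>m adj_mat W"
    using \<delta> by (simp add: smult_smult_mat)
  have "W * adj_mat W = (1 / \<delta>) \<cdot>\<^sub>m (G * (\<delta> \<cdot>\<^sub>m G'))"
    unfolding adjW unfolding W_def by (rule mult_smult_assoc_mat[OF G smult_carrier_mat[OF G'(1)]])
  also have "\<dots> = G * G'"
    using \<delta> by (simp add: mult_smult_distrib[OF G G'(1)] smult_smult_mat)
  finally have "unitary_mat k W" using W WW G'(2) by (simp add: unitary_mat_def)
  thus thesis using GW G'W by (rule that)
qed

lemma gauge_unitary_rescaling:
  assumes X: "X \<in> carrier_mat n k" and Y: "Y \<in> carrier_mat k m"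
    and G: "G \<in> carrier_mat k k" "G' \<in> carrier_mat k k" "G * G' = 1\<^sub>m k"
    and "\<delta> \<noteq> 0" "adj_mat G * G = (cnj \<delta> * \<delta>) \<cdot>\<^sub>m 1\<^sub>m k"
  obtains W where "unitary_mat k W"
    "X * G = \<delta> \<cdot>\<^sub>m (X * W)" "G' * Y = (1 / \<delta>) \<cdot>\<^sub>m (adj_mat W * Y)"
proof -
  obtain W where W: "unitary_mat k W" "G = \<delta> \<cdot>\<^sub>m W" "G' = (1 / \<delta>) \<cdot>\<^sub>m adj_mat W"
    using unitary_rescaling[OF G assms(6,7)] .
  hence "W \<in> carrier_mat k k" unfolding unitary_mat_def by simp
  with W X Y show thesis
    by (intro that) (simp_all add: mult_smult_distrib mult_smult_assoc_mat[OF adj_mat_carrier])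
qed

lemma isometry_mult_right_factor:
  assumes V: "V \<in> carrier_mat n k" and K: "K \<in> carrier_mat k k"
    and "adj_mat V * V = 1\<^sub>m k" and "adj_mat (V * K) * (V * K) = 1\<^sub>m k"
  shows "adj_mat K * K = 1\<^sub>m k"
proof -
  have "adj_mat (V * K) * (V * K) = adj_mat K * (adj_mat V * (V * K))"
    unfolding adj_mat_mult[OF V K]
    by (rule assoc_mult_mat[OF adj_mat_carrier[OF K] adj_mat_carrier[OF V] mult_carrier_mat[OF V K]])
  also have "adj_mat V * (V * K) = K"
    using assms(3) K by (simp flip: assoc_mult_mat[OF adj_mat_carrier[OF V] V K])
  finally show ?thesis using assms(4) by simp
qed

lemma mult_inverse_sandwich:
  fixes L :: "'a :: semiring_1 mat"
  assumes L: "L \<in> carrier_mat k n" and A: "A \<in> carrier_mat n k" and X: "X \<in> carrier_mat k k"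
    and B: "B \<in> carrier_mat k m" and R: "R \<in> carrier_mat m k"
    and LA: "L * A = 1\<^sub>m k" and BR: "B * R = 1\<^sub>m k"
  shows "L * (A * X * B) * R = X"
proof -
  have "L * (A * X * B) = L * (A * X) * B"
    by (rule assoc_mult_mat[OF L mult_carrier_mat[OF A X] B, symmetric])
  also have "L * (A * X) = X"
    using X by (simp add: LA flip: assoc_mult_mat[OF L A X])
  finally have "L * (A * X * B) * R = X * (B * R)"
    using assoc_mult_mat[OF X B R] by simp
  thus ?thesis using X BR by simp
qed

lemma rank_factorization_unique:
  fixes A B A' B' :: "complex mat"
  assumes A: "A \<in> carrier_mat n k" and B: "B \<in> carrier_mat k m"
    and A': "A' \<in> carrier_mat n k" and B': "B' \<in> carrier_mat k m"
    and eq: "A * B = A' * B'"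
    and "left_invertible A" "right_invertible B" "left_invertible A'" "right_invertible B'"
  obtains G G' where "G \<in> carrier_mat k k" "G' \<in> carrier_mat k k"
    "A' = A * G" "B' = G' * B" "G * G' = 1\<^sub>m k"
proof -
  obtain L where L: "L \<in> carrier_mat k n" "L * A = 1\<^sub>m k"
    using assms(6) A unfolding left_invertible_def by auto
  obtain R where R: "R \<in> carrier_mat m k" "B * R = 1\<^sub>m k"
    using assms(7) B unfolding right_invertible_def by auto
  obtain L' where L': "L' \<in> carrier_mat k n" "L' * A' = 1\<^sub>m k"
    using assms(8) A' unfolding left_invertible_def by auto
  obtain R' where R': "R' \<in> carrier_mat m k" "B' * R' = 1\<^sub>m k"
    using assms(9) B' unfolding right_invertible_def by auto
  define G where "G = B * R'"
  define G' where "G' = L' * A"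
  have G: "G \<in> carrier_mat k k" and G': "G' \<in> carrier_mat k k"
    using B R' L' A by (simp_all add: G_def G'_def)
  have A'G: "A' = A * G"
  proof -
    have "A' = (A' * B') * R'" using A' B' R' by simp
    thus ?thesis using A B R' by (simp add: G_def flip: eq)
  qed
  have B'G': "B' = G' * B"
  proof -
    have "B' = L' * (A' * B')" using L' A' B' by (simp flip: assoc_mult_mat[OF L'(1) A' B'])
    thus ?thesis using L' A B by (simp add: G'_def flip: eq)
  qed
  have "A * (G * G') * B = A' * B'"
    unfolding A'G B'G' using A G G' B
    by (simp add: assoc_mult_mat[OF A G mult_carrier_mat[OF G' B]]
        assoc_mult_mat[OF A mult_carrier_mat[OF G G'] B] assoc_mult_mat[OF G G' B])
  hence "G * G' = L * (A * 1\<^sub>m k * B) * R"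
    using mult_inverse_sandwich[OF L(1) A mult_carrier_mat[OF G G'] B R(1) L(2) R(2)] A B
    by (simp add: eq)
  also have "\<dots> = 1\<^sub>m k"
    by (rule mult_inverse_sandwich[OF L(1) A one_carrier_mat B R(1) L(2) R(2)])
  finally have "G * G' = 1\<^sub>m k" .
  with G G' A'G B'G' show thesis by (rule that)
qed

lemma admissible_carrier:
  assumes "admissible d D dl dr U X1 Y1 X2 Y2"
  shows "X1 \<in> carrier_mat (d * D) dr" "Y1 \<in> carrier_mat dr (D * d)"
    "X2 \<in> carrier_mat (d * D) dl" "Y2 \<in> carrier_mat dl (d * D)"
  using assms unfolding admissible_def by blast+

lemma admissible_entries:
  assumes "admissible d D dl dr U X1 Y1 X2 Y2" "i < d" "j < d" "\<alpha> < D" "\<beta> < D"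
  shows "U i j \<alpha> \<beta> = (\<Sum>b<dr. X1 $$ (i * D + \<beta>, b) * Y1 $$ (b, \<alpha> * d + j))"
    "U i j \<alpha> \<beta> = (\<Sum>a<dl. X2 $$ (i * D + \<alpha>, a) * Y2 $$ (a, j * D + \<beta>))"
  using assms unfolding admissible_def by blast+

lemma admissible_index_mult_X1_Y1:
  assumes adm: "admissible d D dl dr U X1 Y1 X2 Y2" and p: "p < d * D" and q: "q < D * d"
  shows "(X1 * Y1) $$ (p, q) = U (p div D) (q mod d) (q div d) (p mod D)"
proof -
  have "0 < D" "0 < d" using p by (auto intro: ccontr)
  hence "p div D < d" "q mod d < d" "q div d < D" "p mod D < D"
    using p q by (simp_all add: less_mult_imp_div_less mult.commute[of D])
  from admissible_entries(1)[OF adm this] show ?thesis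
    using admissible_carrier[OF adm] p q
    by (simp add: index_mult_mat_sum[of _ "d * D" dr _ "D * d"] del: index_mult_mat(1))
qed

lemma admissible_index_mult_X2_Y2:
  assumes adm: "admissible d D dl dr U X1 Y1 X2 Y2" and p: "p < d * D" and q: "q < d * D"
  shows "(X2 * Y2) $$ (p, q) = U (p div D) (q div D) (p mod D) (q mod D)"
proof -
  have "0 < D" using p by (auto intro: ccontr)
  hence "p div D < d" "q div D < d" "p mod D < D" "q mod D < D"
    using p q by (simp_all add: less_mult_imp_div_less)
  from admissible_entries(2)[OF adm this] show ?thesis
    using admissible_carrier[OF adm] p q
    by (simp add: index_mult_mat_sum[of _ "d * D" dl _ "d * D"] del: index_mult_mat(1))
qed

lemma admissible_products_eq:
  assumes adm: "admissible d D dl dr U X1 Y1 X2 Y2" and adm': "admissible d D dl dr U X1' Y1' X2' Y2'"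
  shows "X1 * Y1 = X1' * Y1'" "X2 * Y2 = X2' * Y2'"
  using admissible_carrier[OF adm] admissible_carrier[OF adm']
  by (auto intro!: eq_matI simp: admissible_index_mult_X1_Y1[OF adm] admissible_index_mult_X1_Y1[OF adm']
      admissible_index_mult_X2_Y2[OF adm] admissible_index_mult_X2_Y2[OF adm'] simp del: index_mult_mat(1))

lemma v_mat_carrier: "v_mat d D dl dr X1 X2 \<in> carrier_mat (d * d) (dr * dl)"
  by (simp add: v_mat_def mult.commute)

lemma index_v_mat:
  assumes "r < d * d" "b < dr" "a < dl"
  shows "v_mat d D dl dr X1 X2 $$ (r, b * dl + a)
    = (\<Sum>\<gamma><D. X1 $$ (r div d * D + \<gamma>, b) * X2 $$ (r mod d * D + \<gamma>, a))"
proof -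
  have "b * dl + a < dr * dl" using assms(2,3) by (rule mult_add_less_mult)
  thus ?thesis using assms by (simp add: v_mat_def)
qed

lemma v_mat_mult_right:
  assumes X1: "X1 \<in> carrier_mat (d * D) dr" and X2: "X2 \<in> carrier_mat (d * D) dl"
    and G: "G \<in> carrier_mat dr dr" and H: "H \<in> carrier_mat dl dl"
  shows "v_mat d D dl dr (X1 * G) (X2 * H) = v_mat d D dl dr X1 X2 * kronecker_mat G H"
proof (rule eq_matI)
  let ?v = "v_mat d D dl dr X1 X2"
  note v = v_mat_carrier[of d D dl dr X1 X2]
  fix r c assume "r < dim_row (?v * kronecker_mat G H)" "c < dim_col (?v * kronecker_mat G H)"
  hence r: "r < d * d" and c: "c < dr * dl" using v G H by auto
  define b a where "b = c div dl" and "a = c mod dl"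
  have "0 < dl" "0 < d" using c r by (auto intro: ccontr)
  hence ba: "b < dr" "a < dl" "c = b * dl + a" and rd: "r div d < d" "r mod d < d"
    using c r by (simp_all add: b_def a_def less_mult_imp_div_less)
  define x1 x2 where "x1 \<gamma> = r div d * D + \<gamma>" and "x2 \<gamma> = r mod d * D + \<gamma>" for \<gamma>
  have x: "x1 \<gamma> < d * D" "x2 \<gamma> < d * D" if "\<gamma> < D" for \<gamma>
    using rd that by (simp_all add: x1_def x2_def mult_add_less_mult)
  have "v_mat d D dl dr (X1 * G) (X2 * H) $$ (r, c)
      = (\<Sum>\<gamma><D. (\<Sum>b'<dr. X1 $$ (x1 \<gamma>, b') * G $$ (b', b)) * (\<Sum>a'<dl. X2 $$ (x2 \<gamma>, a') * H $$ (a', a)))"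
    unfolding ba(3) index_v_mat[OF r ba(1,2)] x1_def[symmetric] x2_def[symmetric]
    using x ba by (intro sum.cong refl) (simp add: index_mult_mat_sum[OF X1 G] index_mult_mat_sum[OF X2 H]
        del: index_mult_mat(1))
  also have "\<dots> = (\<Sum>b'<dr. \<Sum>a'<dl.
      (\<Sum>\<gamma><D. X1 $$ (x1 \<gamma>, b') * X2 $$ (x2 \<gamma>, a')) * (G $$ (b', b) * H $$ (a', a)))"
    unfolding sum_product sum_distrib_right
    by (subst sum.swap, rule sum.cong[OF refl], subst sum.swap) (simp add: sum_distrib_left mult_ac)
  also have "\<dots> = (\<Sum>b'<dr. \<Sum>a'<dl. ?v $$ (r, b' * dl + a') * kronecker_mat G H $$ (b' * dl + a', c))"
    unfolding ba(3) x1_def x2_def using r ba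
    by (intro sum.cong refl) (simp add: index_v_mat index_kronecker_mat[OF G H])
  also have "\<dots> = (?v * kronecker_mat G H) $$ (r, c)"
    using r c by (simp add: index_mult_mat_sum[OF v kronecker_mat_carrier[OF G H]] sum_lessThan_mult_split
        del: index_mult_mat(1))
  finally show "v_mat d D dl dr (X1 * G) (X2 * H) $$ (r, c) = (?v * kronecker_mat G H) $$ (r, c)" .
qed (use G H in \<open>simp_all add: v_mat_def mult.commute\<close>)

lemma admissible_v_mat_isometry:
  assumes "admissible d D dl dr U X1 Y1 X2 Y2"
  shows "adj_mat (v_mat d D dl dr X1 X2) * v_mat d D dl dr X1 X2 = 1\<^sub>m (dr * dl)"
proof -
  have "unitary_mat (d * d) (v_mat d D dl dr X1 X2)"
    using assms unfolding admissible_def by blast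
  moreover from this have "dr * dl = d * d"
    unfolding unitary_mat_def v_mat_def by auto
  ultimately show ?thesis unfolding unitary_mat_def by simp
qed

lemma admissible_gauge_kronecker_gram:
  assumes adm: "admissible d D dl dr U X1 Y1 X2 Y2"
    and adm': "admissible d D dl dr U (X1 * G) Y1' (X2 * H) Y2'"
    and G: "G \<in> carrier_mat dr dr" and H: "H \<in> carrier_mat dl dl"
  shows "kronecker_mat (adj_mat G * G) (adj_mat H * H) = 1\<^sub>m (dr * dl)"
proof -
  note X = admissible_carrier[OF adm]
  have "adj_mat (v_mat d D dl dr X1 X2 * kronecker_mat G H) * (v_mat d D dl dr X1 X2 * kronecker_mat G H)
      = 1\<^sub>m (dr * dl)"
    using admissible_v_mat_isometry[OF adm'] unfolding v_mat_mult_right[OF X(1,3) G H] .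
  hence "adj_mat (kronecker_mat G H) * kronecker_mat G H = 1\<^sub>m (dr * dl)"
    by (rule isometry_mult_right_factor[OF v_mat_carrier kronecker_mat_carrier[OF G H]
          admissible_v_mat_isometry[OF adm]])
  thus ?thesis
    by (simp add: adj_mat_kronecker_mat[OF G H]
        kronecker_mat_mult[OF adj_mat_carrier[OF G] adj_mat_carrier[OF H] G H])
qed

theorem mainTheorem2:
  fixes d D dl dr :: nat
    and U :: "nat \<Rightarrow> nat \<Rightarrow> nat \<Rightarrow> nat \<Rightarrow> complex"
    and X1 Y1 X2 Y2 X1' Y1' X2' Y2' :: "complex mat"
  assumes "d > 0" "D > 0" "dl > 0" "dr > 0"
    and "admissible d D dl dr U X1 Y1 X2 Y2"
    and "admissible d D dl dr U X1' Y1' X2' Y2'"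
    and "left_invertible X1" "left_invertible X2"
    and "left_invertible X1'" "left_invertible X2'"
    and "right_invertible Y1" "right_invertible Y2"
    and "right_invertible Y1'" "right_invertible Y2'"
  shows "\<exists>\<delta>1 \<delta>2 :: complex. \<exists>W1 W2.
     \<delta>1 \<noteq> 0 \<and> \<delta>2 \<noteq> 0 \<and> \<delta>1 * \<delta>2 = 1 \<and>
     unitary_mat dr W1 \<and> unitary_mat dl W2 \<and>
     X1' = \<delta>1 \<cdot>\<^sub>m (X1 * W1) \<and> Y1' = (1 / \<delta>1) \<cdot>\<^sub>m (adj_mat W1 * Y1) \<and>
     X2' = \<delta>2 \<cdot>\<^sub>m (X2 * W2) \<and> Y2' = (1 / \<delta>2) \<cdot>\<^sub>m (adj_mat W2 * Y2)"
proof -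
  note adm = assms(5) and adm' = assms(6)
  note X = admissible_carrier[OF adm] and X' = admissible_carrier[OF adm']
  obtain G G' where G: "G \<in> carrier_mat dr dr" "G' \<in> carrier_mat dr dr"
    and G_eq: "X1' = X1 * G" "Y1' = G' * Y1" "G * G' = 1\<^sub>m dr"
    using rank_factorization_unique[OF X(1,2) X'(1,2) admissible_products_eq(1)[OF adm adm']
        assms(7,11,9,13)] .
  obtain H H' where H: "H \<in> carrier_mat dl dl" "H' \<in> carrier_mat dl dl"
    and H_eq: "X2' = X2 * H" "Y2' = H' * Y2" "H * H' = 1\<^sub>m dl"
    using rank_factorization_unique[OF X(3,4) X'(3,4) admissible_products_eq(2)[OF adm adm']
        assms(8,12,10,14)] .
  have "kronecker_mat (adj_mat G * G) (adj_mat H * H) = 1\<^sub>m (dr * dl)"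
    using admissible_gauge_kronecker_gram[OF adm _ G(1) H(1)] adm' by (simp add: G_eq H_eq)
  then obtain \<delta> where \<delta>: "\<delta> \<noteq> 0" "adj_mat G * G = (cnj \<delta> * \<delta>) \<cdot>\<^sub>m 1\<^sub>m dr"
    "adj_mat H * H = (cnj (1 / \<delta>) * (1 / \<delta>)) \<cdot>\<^sub>m 1\<^sub>m dl"
    by (rule gram_kronecker_eq_one_mat_scaling[OF G(1) H(1) assms(4,3)])
  obtain W1 where W1: "unitary_mat dr W1" "X1' = \<delta> \<cdot>\<^sub>m (X1 * W1)" "Y1' = (1 / \<delta>) \<cdot>\<^sub>m (adj_mat W1 * Y1)"
    using gauge_unitary_rescaling[OF X(1,2) G G_eq(3) \<delta>(1,2)] unfolding G_eq by blast
  obtain W2 where W2: "unitary_mat dl W2" "X2' = (1 / \<delta>) \<cdot>\<^sub>m (X2 * W2)"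
      "Y2' = \<delta> \<cdot>\<^sub>m (adj_mat W2 * Y2)"
    using gauge_unitary_rescaling[OF X(3,4) H H_eq(3) _ \<delta>(3)] \<delta>(1) unfolding H_eq by auto
  show ?thesis
    using \<delta>(1) W1 W2 by (intro exI[of _ \<delta>] exI[of _ "1 / \<delta>"] exI[of _ W1] exI[of _ W2]) simp
qed

end
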